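(* Let $G_{wy}$ and $G_{zx}$ be Lagrangian grid diagrams of the same size $n$ (in the $(w,y)$-plane and the $(z,x)$-plane respectively) such that $|\Delta t(c_i)|\neq|\Delta t(c'_j)|$ for every crossing $c_i$ of $G_{wy}$ and every crossing $c'_j$ of $G_{zx}$. Then there is a Lagrangian hypercube diagram whose $wy$- and $zx$-projections are $G_{wy}$ and $G_{zx}$.
   Context: Grid conventions. In a plane with coordinates $(a,b)$ (here $(a,b)=(w,y)$ or $(a,b)=(z,x)$), an immersed grid diagram of size $n$ is an $n\times n$ grid of unit cells in $[0,n]^2$ with two kinds of markings at centers of cells, each row and each column containing exactly one marking of each kind; joining each marking of the first kind to the marking of the second kind in its row by an $a$-parallel segment, and each marking of the second kind to the marking of the first kind in its column by a $b$-parallel segment, gives an oriented connected closed piecewise-linear curve, with no crossing information, viewed as an immersion $\gamma:\mathbb{R}/2\pi\mathbb{Z}\to\mathbb{R}^2$, $\theta\mapsto(a(\theta),b(\theta))$. It is a Lagrangian grid diagram if (1) $\int_0^{2\pi}b\,a'\,d\theta=0$ and (2) $\int_{\theta_0}^{\theta_1}b\,a'\,d\theta\neq0$ whenever $\theta_0\neq\theta_1$ and $\gamma(\theta_0)=\gamma(\theta_1)$. For a crossing $c=\gamma(\theta_0)=\gamma(\theta_1)$ put $|\Delta t(c)|=|\int_{\theta_0}^{\theta_1}b\,a'\,d\theta|$. Hypercube diagrams. Let $C=[0,n]^4$ with coordinates $(w,x,y,z)$. A flat is a product in which two coordinates range over $[0,n]$ and the other two over unit intervals $[k,k+1]$, named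 by its two full coordinates; a cube is a product in which three coordinates range over $[0,n]$ and one over a unit interval. Markings are points with coordinates in $\mathbb{Z}+\frac12$ labelled $W,X,Y,Z$. Marking conditions: each cube contains exactly one marking of each label; each cube contains exactly two flats containing exactly three markings; in each such flat the three markings form a right angle with rays parallel to coordinate axes; its vertex is $W$ iff the flat is a $zw$-flat, $X$ iff a $wx$-flat, $Y$ iff an $xy$-flat, $Z$ iff a $yz$-flat. Join each $W$ to an $X$ by a $w$-parallel segment, each $X$ to a $Y$ by an $x$-parallel segment, each $Y$ to a $Z$ by a $y$-parallel segment and each $Z$ to a $W$ by a $z$-parallel segment; the projections of this curve to the $(w,y)$- and $(z,x)$-planes are immersed grid diagrams (the $wy$- and $zx$-projections). A Lagrangian hypercube diagram is such a marked hypercube satisfying the marking conditions whose two projections are Lagrangian grid diagrams with $|\Delta t(c)|\neq|\Delta t(c')|$ for all crossings $c$ of the $zx$-projection and $c'$ of the $wy$-projection. *)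

theory Defs
  imports "HOL-Analysis.Analysis"
begin

text \<open>A cell of the n x n grid is indexed by (a,b) with a,b < n; its centre is
  (a + 1/2, b + 1/2).  A grid diagram is a pair (M1, M2) of the cells carrying
  markings of the first and of the second kind.\<close>

type_synonym cell = "nat \<times> nat"
type_synonym grid = "cell set \<times> cell set"

definition grid_diagram :: "nat \<Rightarrow> grid \<Rightarrow> bool" where
  "grid_diagram n G \<longleftrightarrow>
     fst G \<subseteq> {0..<n} \<times> {0..<n} \<and> snd G \<subseteq> {0..<n} \<times> {0..<n} \<and>
     (\<forall>b<n. \<exists>!a. (a, b) \<in> fst G) \<and> (\<forall>b<n. \<exists>!a. (a, b) \<in> snd G) \<and>
     (\<forall>a<n. \<exists>!b. (a, b) \<in> fst G) \<and> (\<forall>a<n. \<exists>!b. (a, b) \<in> snd G)"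

definition row_mark :: "cell set \<Rightarrow> nat \<Rightarrow> nat" where
  "row_mark M b = (THE a. (a, b) \<in> M)"

definition col_mark :: "cell set \<Rightarrow> nat \<Rightarrow> nat" where
  "col_mark M a = (THE b. (a, b) \<in> M)"

text \<open>From a first-kind marking go along its row (a-parallel) to the second-kind
  marking, then along that column (b-parallel) to the next first-kind marking.\<close>
definition grid_next :: "grid \<Rightarrow> cell \<Rightarrow> cell" where
  "grid_next G p = (let a' = row_mark (snd G) (snd p) in (a', col_mark (fst G) a'))"

text \<open>The associated curve is an immersed (nondegenerate) connected closed curve.\<close>
definition immersed_grid_diagram :: "nat \<Rightarrow> grid \<Rightarrow> bool" where
  "immersed_grid_diagram n G \<longleftrightarrow>
     grid_diagram n G \<and> 0 < n \<and> fst G \<inter> snd G = {} \<and>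
     (\<forall>p\<in>fst G. \<forall>q\<in>fst G. \<exists>k. (grid_next G ^^ k) p = q)"

definition grid_start :: "grid \<Rightarrow> cell" where
  "grid_start G = (0, col_mark (fst G) 0)"

text \<open>Vertices of the curve: even index = first-kind marking, odd index = second-kind.\<close>
definition grid_vertex :: "grid \<Rightarrow> nat \<Rightarrow> real \<times> real" where
  "grid_vertex G k =
     (let p = (grid_next G ^^ (k div 2)) (grid_start G);
          c = (if even k then p else (row_mark (snd G) (snd p), snd p))
      in (real (fst c) + 1/2, real (snd c) + 1/2))"

text \<open>The immersion gamma : R/2piZ -> R^2 (as a 2pi-periodic map on R), traversing the
  2n segments at constant speed in parameter.\<close>
definition grid_curve :: "nat \<Rightarrow> grid \<Rightarrow> real \<Rightarrow> real \<times> real" where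
  "grid_curve n G \<theta> =
     (let s = frac (\<theta> / (2 * pi)) * real (2 * n); k = nat \<lfloor>s\<rfloor>; t = s - real k
      in (1 - t) *\<^sub>R grid_vertex G k + t *\<^sub>R grid_vertex G (Suc k))"

definition grid_action :: "nat \<Rightarrow> grid \<Rightarrow> real \<Rightarrow> real \<Rightarrow> real" where
  "grid_action n G \<theta>0 \<theta>1 =
     (let f = (\<lambda>\<theta>. snd (grid_curve n G \<theta>) * deriv (\<lambda>s. fst (grid_curve n G s)) \<theta>)
      in if \<theta>0 \<le> \<theta>1 then integral {\<theta>0..\<theta>1} f else - integral {\<theta>1..\<theta>0} f)"

definition lagrangian_grid :: "nat \<Rightarrow> grid \<Rightarrow> bool" where
  "lagrangian_grid n G \<longleftrightarrow>
     immersed_grid_diagram n G \<and>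
     grid_action n G 0 (2 * pi) = 0 \<and>
     (\<forall>\<theta>0\<in>{0..<2*pi}. \<forall>\<theta>1\<in>{0..<2*pi}.
        \<theta>0 \<noteq> \<theta>1 \<and> grid_curve n G \<theta>0 = grid_curve n G \<theta>1 \<longrightarrow> grid_action n G \<theta>0 \<theta>1 \<noteq> 0)"

definition crossing_actions :: "nat \<Rightarrow> grid \<Rightarrow> real set" where
  "crossing_actions n G =
     {\<bar>grid_action n G \<theta>0 \<theta>1\<bar> | \<theta>0 \<theta>1. \<theta>0 \<in> {0..<2*pi} \<and> \<theta>1 \<in> {0..<2*pi} \<and>
        \<theta>0 \<noteq> \<theta>1 \<and> grid_curve n G \<theta>0 = grid_curve n G \<theta>1}"

datatype axis = Aw | Ax | Ay | Az
datatype label = LW | LX | LY | LZ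

text \<open>A marking point is given by its cell index p : axis -> nat (coordinates p k + 1/2);
  M l is the set of markings with label l.\<close>
type_synonym point4 = "axis \<Rightarrow> nat"
type_synonym marking = "label \<Rightarrow> point4 set"

definition marks :: "marking \<Rightarrow> (label \<times> point4) set" where
  "marks M = {(l, p). p \<in> M l}"

definition flat_marks :: "marking \<Rightarrow> axis \<Rightarrow> nat \<Rightarrow> axis \<Rightarrow> nat \<Rightarrow> (label \<times> point4) set" where
  "flat_marks M k1 m1 k2 m2 = {(l, p) \<in> marks M. p k1 = m1 \<and> p k2 = m2}"

definition right_angle_at :: "point4 \<Rightarrow> point4 \<Rightarrow> point4 \<Rightarrow> bool" where
  "right_angle_at v p q \<longleftrightarrow>
     (\<exists>i j. i \<noteq> j \<and> p i \<noteq> v i \<and> (\<forall>k. k \<noteq> i \<longrightarrow> p k = v k) \<and>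
            q j \<noteq> v j \<and> (\<forall>k. k \<noteq> j \<longrightarrow> q k = v k))"

text \<open>Vertex label vs. flat name: a zw-flat has fixed axes x,y; wx-flat fixed y,z;
  xy-flat fixed z,w; yz-flat fixed w,x.\<close>
definition vertex_label_ok :: "label \<Rightarrow> axis \<Rightarrow> axis \<Rightarrow> bool" where
  "vertex_label_ok l k1 k2 \<longleftrightarrow>
     (l = LW \<longleftrightarrow> {k1, k2} = {Ax, Ay}) \<and> (l = LX \<longleftrightarrow> {k1, k2} = {Ay, Az}) \<and>
     (l = LY \<longleftrightarrow> {k1, k2} = {Az, Aw}) \<and> (l = LZ \<longleftrightarrow> {k1, k2} = {Aw, Ax})"

definition marking_conditions :: "nat \<Rightarrow> marking \<Rightarrow> bool" where
  "marking_conditions n M \<longleftrightarrow>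
     (\<forall>l. \<forall>p\<in>M l. \<forall>k. p k < n) \<and>
     (\<forall>k. \<forall>m<n. \<forall>l. card {p \<in> M l. p k = m} = 1) \<and>
     (\<forall>k. \<forall>m<n. card {(k', m'). k' \<noteq> k \<and> m' < n \<and> card (flat_marks M k m k' m') = 3} = 2) \<and>
     (\<forall>k1 k2 m1 m2. k1 \<noteq> k2 \<and> m1 < n \<and> m2 < n \<and> card (flat_marks M k1 m1 k2 m2) = 3 \<longrightarrow>
        (\<exists>lv v l1 p1 l2 p2. flat_marks M k1 m1 k2 m2 = {(lv, v), (l1, p1), (l2, p2)} \<and>
           right_angle_at v p1 p2 \<and> vertex_label_ok lv k1 k2))"

text \<open>The joining segments W-X (w-parallel), X-Y (x-parallel), Y-Z (y-parallel),
  Z-W (z-parallel) exist.\<close>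
definition joinable :: "marking \<Rightarrow> bool" where
  "joinable M \<longleftrightarrow>
     (\<forall>p\<in>M LW. \<exists>q\<in>M LX. \<forall>k. k \<noteq> Aw \<longrightarrow> q k = p k) \<and>
     (\<forall>p\<in>M LX. \<exists>q\<in>M LY. \<forall>k. k \<noteq> Ax \<longrightarrow> q k = p k) \<and>
     (\<forall>p\<in>M LY. \<exists>q\<in>M LZ. \<forall>k. k \<noteq> Ay \<longrightarrow> q k = p k) \<and>
     (\<forall>p\<in>M LZ. \<exists>q\<in>M LW. \<forall>k. k \<noteq> Az \<longrightarrow> q k = p k)"

text \<open>wy-projection: plane (a,b) = (w,y); first kind = W (=Z), second kind = X (=Y).
  zx-projection: plane (a,b) = (z,x); first kind = Z (=Y), second kind = W (=X).\<close>
definition proj_wy :: "marking \<Rightarrow> grid" where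
  "proj_wy M = ((\<lambda>p. (p Aw, p Ay)) ` M LW, (\<lambda>p. (p Aw, p Ay)) ` M LX)"

definition proj_zx :: "marking \<Rightarrow> grid" where
  "proj_zx M = ((\<lambda>p. (p Az, p Ax)) ` M LZ, (\<lambda>p. (p Az, p Ax)) ` M LW)"

definition lagrangian_hypercube :: "nat \<Rightarrow> marking \<Rightarrow> bool" where
  "lagrangian_hypercube n M \<longleftrightarrow>
     marking_conditions n M \<and> joinable M \<and>
     lagrangian_grid n (proj_wy M) \<and> lagrangian_grid n (proj_zx M) \<and>
     (\<forall>d\<in>crossing_actions n (proj_zx M). \<forall>d'\<in>crossing_actions n (proj_wy M). d \<noteq> d')"

end

theory Submission
  imports Defs "HOL-Combinatorics.Orbits"
begin

text \<open>The Lagrangian conditions on a hypercube diagram only concern its two projections, so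
  the content is combinatorial. Following the curve of an immersed grid diagram lists its
  markings as (\<alpha> k, \<beta> k), (\<alpha> (k+1), \<beta> k), (\<alpha> (k+1), \<beta> (k+1)), ..., where \<alpha> and \<beta>
  run through {0..<n} with period n: the curve is a single cycle of the injective map sending
  a first-kind marking to the next one. Given such enumerations of the wy- and the
  zx-diagram, the hypercube curve W(j) \<rightarrow> X(j) \<rightarrow> Y(j) \<rightarrow> Z(j) \<rightarrow> W(j+1) moves in turn
  along the w-, x-, y- and z-axis, taking its w- and y-coordinates from the first and its z-
  and x-coordinates from the second enumeration. The markings in a cube {p k = m} are then
  four consecutive points of this walk, which yields the cube and flat conditions.\<close>

section \<open>Cyclic enumerations\<close>

lemma funpow_eq_iff_mod_card:
  fixes f :: "'a \<Rightarrow> 'a"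
  assumes fin: "finite S" and into: "f ` S \<subseteq> S" and inj: "inj_on f S"
    and p: "p \<in> S" and reach: "S \<subseteq> range (\<lambda>k. (f ^^ k) p)"
  shows "(f ^^ i) p = (f ^^ j) p \<longleftrightarrow> i mod card S = j mod card S"
proof -
  obtain q where "q \<in> S" "p = f q" using endo_inj_surj[OF fin into inj] p by blast
  moreover obtain k where "q = (f ^^ k) p" using reach \<open>q \<in> S\<close> by blast
  ultimately have "p = (f ^^ Suc k) p" by (metis comp_apply funpow.simps(2))
  then have self: "p \<in> orbit f p" unfolding orbit_altdef using zero_less_Suc by blast
  define d where "d = funpow_dist1 f p p"
  have "(f ^^ k) p \<in> S" for k by (induction k) (use p into in auto)
  then have "S = orbit f p"
    using reach by (auto simp: orbit_altdef_self_in[OF self])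
  also have "\<dots> = (\<lambda>k. (f ^^ k) p) ` {0..<d}"
    unfolding d_def by (rule orbit_conv_funpow_dist1[OF self])
  finally have "card S = d"
    using inj_on_funpow_dist1[OF self] by (simp add: card_image d_def)
  moreover have "(f ^^ k) p = (f ^^ (k mod d)) p" for k
    using funpow_dist1_prop[OF self] by (simp add: d_def funpow_mod_eq)
  moreover have "0 < d" by (simp add: d_def)
  ultimately show ?thesis
    using inj_on_funpow_dist1[OF self] unfolding d_def[symmetric] inj_on_def
    by (metis atLeastLessThan_iff mod_less_divisor zero_le)
qed

definition cyclic_enum :: "nat \<Rightarrow> (nat \<Rightarrow> nat) \<Rightarrow> bool" where
  "cyclic_enum n s \<longleftrightarrow> (\<forall>k. s k < n) \<and> (\<forall>i j. s i = s j \<longleftrightarrow> i mod n = j mod n)"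

lemma mod_add_right_cancel_nat: "(a + c) mod n = (b + c) mod n \<longleftrightarrow> a mod n = b mod (n::nat)"
  using nat_mod_eq_iff by auto

lemma cyclic_enum_less: "cyclic_enum n s \<Longrightarrow> s k < n"
  by (simp add: cyclic_enum_def)

lemma cyclic_enum_eq_iff: "cyclic_enum n s \<Longrightarrow> s i = s j \<longleftrightarrow> i mod n = j mod n"
  by (simp add: cyclic_enum_def)

lemma cyclic_enum_Suc: "cyclic_enum n s \<Longrightarrow> cyclic_enum n (\<lambda>k. s (Suc k))"
  using mod_add_right_cancel_nat[of _ 1] by (simp add: cyclic_enum_def)

lemma cyclic_enum_periodic: "cyclic_enum n s \<Longrightarrow> s (k + n) = s k"
  by (simp add: cyclic_enum_eq_iff)

lemma cyclic_enum_pos: "cyclic_enum n s \<Longrightarrow> 0 < n"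
  using cyclic_enum_less by fastforce

lemma cyclic_enum_surj:
  assumes s: "cyclic_enum n s" and "m < n"
  obtains k where "s k = m"
proof -
  have "inj_on s {0..<n}"
    by (rule inj_onI) (simp add: cyclic_enum_eq_iff[OF s])
  then have "s ` {0..<n} = {0..<n}"
    using cyclic_enum_less[OF s] by (intro card_subset_eq) (auto simp: card_image)
  then show ?thesis using that \<open>m < n\<close> by (metis atLeastLessThan_iff imageE zero_le)
qed

section \<open>Enumerating a grid diagram along its curve\<close>

definition permutation_matrix :: "nat \<Rightarrow> cell set \<Rightarrow> bool" where
  "permutation_matrix n M \<longleftrightarrow>
     M \<subseteq> {0..<n} \<times> {0..<n} \<and> (\<forall>b<n. \<exists>!a. (a, b) \<in> M) \<and> (\<forall>a<n. \<exists>!b. (a, b) \<in> M)"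

lemma grid_diagram_iff:
  "grid_diagram n G \<longleftrightarrow> permutation_matrix n (fst G) \<and> permutation_matrix n (snd G)"
  unfolding grid_diagram_def permutation_matrix_def by auto

context
  fixes n :: nat and M :: "cell set"
  assumes M: "permutation_matrix n M"
begin

lemma permutation_matrix_bounded: "(a, b) \<in> M \<Longrightarrow> a < n \<and> b < n"
  using M by (auto simp: permutation_matrix_def)

lemma permutation_matrix_row_unique:
  assumes "(a, b) \<in> M" "(a', b) \<in> M" shows "a = a'"
proof -
  have "\<exists>!a. (a, b) \<in> M"
    using M permutation_matrix_bounded[OF assms(1)] by (simp add: permutation_matrix_def)
  then show ?thesis using assms by blast
qed

lemma permutation_matrix_col_unique:
  assumes "(a, b) \<in> M" "(a, b') \<in> M" shows "b = b'"
proof -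
  have "\<exists>!b. (a, b) \<in> M"
    using M permutation_matrix_bounded[OF assms(1)] by (simp add: permutation_matrix_def)
  then show ?thesis using assms by blast
qed

lemma row_mark_mem: "b < n \<Longrightarrow> (row_mark M b, b) \<in> M"
  using M unfolding permutation_matrix_def row_mark_def by (metis theI')

lemma col_mark_mem: "a < n \<Longrightarrow> (a, col_mark M a) \<in> M"
  using M unfolding permutation_matrix_def col_mark_def by (metis theI')

lemma permutation_matrix_card: "card M = n"
proof -
  have "bij_betw snd M {0..<n}"
    unfolding bij_betw_def inj_on_def
    using permutation_matrix_row_unique permutation_matrix_bounded row_mark_mem
    by (auto simp: image_iff) (metis snd_conv)
  then show ?thesis by (simp add: bij_betw_same_card)
qed

lemma permutation_matrix_eq_range:
  assumes \<beta>: "cyclic_enum n \<beta>" and mem: "\<And>k. (\<gamma> k, \<beta> k) \<in> M"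
  shows "M = range (\<lambda>k. (\<gamma> k, \<beta> k))"
proof
  show "M \<subseteq> range (\<lambda>k. (\<gamma> k, \<beta> k))"
  proof
    fix x assume x: "x \<in> M"
    obtain a b where ab: "x = (a, b)" by fastforce
    then have "b < n" using permutation_matrix_bounded x by blast
    then obtain k where "\<beta> k = b" by (rule cyclic_enum_surj[OF \<beta>])
    then show "x \<in> range (\<lambda>k. (\<gamma> k, \<beta> k))"
      using permutation_matrix_row_unique mem[of k] x ab by auto
  qed
qed (use mem in blast)

lemma permutation_matrix_cyclic_enum:
  assumes "range h \<subseteq> M" and "\<And>i j. h i = h j \<longleftrightarrow> i mod n = j mod n"
  shows "cyclic_enum n (\<lambda>k. fst (h k))" and "cyclic_enum n (\<lambda>k. snd (h k))"
proof -
  have mem: "(fst (h k), snd (h k)) \<in> M" for k using assms(1) by auto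
  show "cyclic_enum n (\<lambda>k. fst (h k))"
    using permutation_matrix_bounded mem permutation_matrix_col_unique
    unfolding cyclic_enum_def assms(2)[symmetric] by (metis prod.expand)
  show "cyclic_enum n (\<lambda>k. snd (h k))"
    using permutation_matrix_bounded mem permutation_matrix_row_unique
    unfolding cyclic_enum_def assms(2)[symmetric] by (metis prod.expand)
qed

end

lemma grid_next_mem:
  assumes "grid_diagram n G" "p \<in> fst G"
  shows "grid_next G p \<in> fst G" and "(fst (grid_next G p), snd p) \<in> snd G"
proof -
  have F: "permutation_matrix n (fst G)" and E: "permutation_matrix n (snd G)"
    using assms(1) by (simp_all add: grid_diagram_iff)
  have "snd p < n" using permutation_matrix_bounded[OF F] assms(2) by (cases p) simp
  then show "(fst (grid_next G p), snd p) \<in> snd G"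
    using row_mark_mem[OF E] by (simp add: grid_next_def Let_def)
  then have "fst (grid_next G p) < n" using permutation_matrix_bounded[OF E] by blast
  then show "grid_next G p \<in> fst G"
    using col_mark_mem[OF F] by (simp add: grid_next_def Let_def)
qed

lemma inj_on_grid_next:
  assumes "grid_diagram n G" shows "inj_on (grid_next G) (fst G)"
proof (rule inj_onI)
  fix p q assume p: "p \<in> fst G" and q: "q \<in> fst G" and eq: "grid_next G p = grid_next G q"
  have F: "permutation_matrix n (fst G)" and E: "permutation_matrix n (snd G)"
    using assms by (simp_all add: grid_diagram_iff)
  have "snd p = snd q"
    using grid_next_mem(2)[OF assms p] grid_next_mem(2)[OF assms q] eq
    by (metis permutation_matrix_col_unique[OF E])
  moreover have "(fst p, snd p) \<in> fst G" "(fst q, snd q) \<in> fst G" using p q by simp_all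
  ultimately show "p = q"
    using permutation_matrix_row_unique[OF F] by (metis prod.expand)
qed

lemma grid_next_orbit:
  assumes G: "immersed_grid_diagram n G"
  defines "h \<equiv> \<lambda>k. (grid_next G ^^ k) (grid_start G)"
  shows "fst G = range h" and "h i = h j \<longleftrightarrow> i mod n = j mod n"
proof -
  have gd: "grid_diagram n G" and "0 < n"
    and orbit: "\<forall>p\<in>fst G. \<forall>q\<in>fst G. \<exists>k. (grid_next G ^^ k) p = q"
    using G by (simp_all add: immersed_grid_diagram_def)
  have F: "permutation_matrix n (fst G)" using gd by (simp add: grid_diagram_iff)
  have start: "grid_start G \<in> fst G"
    using col_mark_mem[OF F \<open>0 < n\<close>] by (simp add: grid_start_def)
  have into: "grid_next G ` fst G \<subseteq> fst G" using grid_next_mem(1)[OF gd] by blast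
  have "h k \<in> fst G" for k
    unfolding h_def by (induction k) (use start into in auto)
  then show fst_G: "fst G = range h"
    using orbit start by (auto simp: h_def) (metis rangeI)
  have "finite (fst G)"
    using F finite_subset by (auto simp: permutation_matrix_def)
  from funpow_eq_iff_mod_card[OF this into inj_on_grid_next[OF gd] start] fst_G
  show "h i = h j \<longleftrightarrow> i mod n = j mod n"
    unfolding permutation_matrix_card[OF F] h_def by simp
qed

definition grid_enumeration :: "nat \<Rightarrow> grid \<Rightarrow> (nat \<Rightarrow> nat) \<Rightarrow> (nat \<Rightarrow> nat) \<Rightarrow> bool" where
  "grid_enumeration n G \<alpha> \<beta> \<longleftrightarrow> cyclic_enum n \<alpha> \<and> cyclic_enum n \<beta> \<and>
     fst G = range (\<lambda>k. (\<alpha> k, \<beta> k)) \<and> snd G = range (\<lambda>k. (\<alpha> (Suc k), \<beta> k)) \<and>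
     (\<forall>k. \<alpha> (Suc k) \<noteq> \<alpha> k \<and> \<beta> (Suc k) \<noteq> \<beta> k)"

lemma immersed_grid_enumeration:
  assumes G: "immersed_grid_diagram n G"
  obtains \<alpha> \<beta> where "grid_enumeration n G \<alpha> \<beta>"
proof -
  have gd: "grid_diagram n G" and disjoint: "fst G \<inter> snd G = {}"
    using G by (simp_all add: immersed_grid_diagram_def)
  have F: "permutation_matrix n (fst G)" and E: "permutation_matrix n (snd G)"
    using gd by (simp_all add: grid_diagram_iff)
  define h where "h = (\<lambda>k. (grid_next G ^^ k) (grid_start G))"
  define \<alpha> where "\<alpha> = (\<lambda>k. fst (h k))"
  define \<beta> where "\<beta> = (\<lambda>k. snd (h k))"
  have range_h: "fst G = range h" and h_eq_iff: "h i = h j \<longleftrightarrow> i mod n = j mod n" for i j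
    unfolding h_def by (rule grid_next_orbit[OF G])+
  have h: "h = (\<lambda>k. (\<alpha> k, \<beta> k))" by (simp add: \<alpha>_def \<beta>_def)
  have \<alpha>: "cyclic_enum n \<alpha>" and \<beta>: "cyclic_enum n \<beta>"
    unfolding \<alpha>_def \<beta>_def using range_h h_eq_iff
    by (simp_all add: permutation_matrix_cyclic_enum[OF F])
  have step: "(\<alpha> (Suc k), \<beta> k) \<in> snd G" for k
    using grid_next_mem(2)[OF gd, of "h k"] range_h by (auto simp: h_def \<alpha>_def \<beta>_def)
  have fst_G: "fst G = range (\<lambda>k. (\<alpha> k, \<beta> k))" using range_h h by simp
  have "snd G = range (\<lambda>k. (\<alpha> (Suc k), \<beta> k))"
    using permutation_matrix_eq_range[OF E \<beta> step] .
  moreover have "\<alpha> (Suc k) \<noteq> \<alpha> k" for k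
  proof
    assume "\<alpha> (Suc k) = \<alpha> k"
    then have "(\<alpha> k, \<beta> k) \<in> snd G" using step[of k] by simp
    then show False using disjoint fst_G by blast
  qed
  moreover have "\<beta> (Suc k) \<noteq> \<beta> k" for k
  proof
    assume "\<beta> (Suc k) = \<beta> k"
    then have "(\<alpha> (Suc k), \<beta> (Suc k)) \<in> snd G" using step[of k] by simp
    then show False using disjoint fst_G by blast
  qed
  ultimately have "grid_enumeration n G \<alpha> \<beta>"
    using \<alpha> \<beta> fst_G by (simp add: grid_enumeration_def)
  then show ?thesis by (rule that)
qed

section \<open>Cubes traversed by a curve\<close>

definition cube_conditions :: "nat \<Rightarrow> marking \<Rightarrow> axis \<Rightarrow> nat \<Rightarrow> bool" where
  "cube_conditions n M k m \<longleftrightarrow>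
     (\<forall>l. card {p \<in> M l. p k = m} = 1) \<and>
     card {(k', m'). k' \<noteq> k \<and> m' < n \<and> card (flat_marks M k m k' m') = 3} = 2 \<and>
     (\<forall>k' m'. k \<noteq> k' \<and> m' < n \<and> card (flat_marks M k m k' m') = 3 \<longrightarrow>
        (\<exists>lv v l1 p1 l2 p2. flat_marks M k m k' m' = {(lv, v), (l1, p1), (l2, p2)} \<and>
           right_angle_at v p1 p2 \<and> vertex_label_ok lv k k'))"

lemma marking_conditionsI:
  assumes "\<forall>l. \<forall>p\<in>M l. \<forall>k. p k < n" and "\<And>k m. m < n \<Longrightarrow> cube_conditions n M k m"
  shows "marking_conditions n M"
  using assms unfolding marking_conditions_def cube_conditions_def by meson

lemma right_angle_at_upd:
  assumes "i \<noteq> j" "u \<noteq> v i" "w \<noteq> v j"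
  shows "right_angle_at v (v(i := u)) (v(j := w))"
  unfolding right_angle_at_def using assms by (intro exI[of _ i] exI[of _ j]) auto

lemma flat_marks_eq:
  fixes M :: marking
  assumes "\<And>l p. p \<in> M l \<and> p k = m \<longleftrightarrow> (l, p) \<in> S"
  shows "flat_marks M k m k' m' = {x \<in> S. snd x k' = m'}"
  unfolding flat_marks_def marks_def by (auto simp flip: assms)

text \<open>The markings qa, qb, qc, qd of the cube {p k = m}, each obtained from the previous one by
  moving along another axis. The flats with three markings are {p ka = va}, with vertex qc,
  and {p kc = qa kc}, with vertex qb.\<close>

context
  fixes M :: marking and n m :: nat and k ka kb kc :: axis and La Lb Lc Ld :: label
    and qa qb qc qd :: point4 and va vb vc :: nat
  assumes axes: "distinct [k, ka, kb, kc]" "{k, ka, kb, kc} = UNIV"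
    and labels: "distinct [La, Lb, Lc, Ld]" "{La, Lb, Lc, Ld} = UNIV"
    and steps: "qb = qa(ka := va)" "qc = qb(kb := vb)" "qd = qc(kc := vc)"
    and moves: "va \<noteq> qa ka" "vb \<noteq> qb kb" "vc \<noteq> qc kc"
    and cube: "\<And>l p. p \<in> M l \<and> p k = m \<longleftrightarrow> (l, p) \<in> {(La, qa), (Lb, qb), (Lc, qc), (Ld, qd)}"
    and bounds: "va < n" "qa kc < n"
begin

lemma cube_path_coords:
  "qb ka = va" "qc ka = va" "qd ka = va"
  "qb kb = qa kb" "qc kb = vb" "qd kb = vb"
  "qb kc = qa kc" "qc kc = qa kc" "qd kc = vc"
  using axes(1) unfolding steps by auto

lemma cube_path_card_label: "card {p \<in> M l. p k = m} = 1"
proof -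
  have "l \<in> {La, Lb, Lc, Ld}" using labels(2) by blast
  then show ?thesis using cube[of _ l] labels(1) by (auto simp: card_1_singleton_iff)
qed

lemma cube_path_card_flat:
  "card (flat_marks M k m k' m') = length (filter (\<lambda>q. q k' = m') [qa, qb, qc, qd])"
proof -
  define xs where "xs = [(La, qa), (Lb, qb), (Lc, qc), (Ld, qd)]"
  have "distinct xs" using labels(1) by (auto simp: xs_def)
  have "flat_marks M k m k' m' = set (filter (\<lambda>x. snd x k' = m') xs)"
    unfolding flat_marks_eq[OF cube] by (auto simp: xs_def)
  then have "card (flat_marks M k m k' m') = length (filter (\<lambda>x. snd x k' = m') xs)"
    using distinct_card[OF distinct_filter[OF \<open>distinct xs\<close>]] by simp
  also have "\<dots> = length (filter (\<lambda>q. q k' = m') (map snd xs))"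
    by (simp add: filter_map comp_def)
  finally show ?thesis by (simp add: xs_def)
qed

lemma cube_path_three_marks:
  "k' \<noteq> k \<and> m' < n \<and> card (flat_marks M k m k' m') = 3 \<longleftrightarrow>
     (k' = ka \<and> m' = va) \<or> (k' = kc \<and> m' = qa kc)"
proof -
  have "k' \<in> {k, ka, kb, kc}" using axes(2) by blast
  then consider "k' = k" | "k' = ka" | "k' = kb" | "k' = kc" by blast
  then show ?thesis
    using axes(1) moves(1,3) bounds cube_path_coords unfolding cube_path_card_flat
    by cases auto
qed

lemma cube_conditionsI:
  assumes "vertex_label_ok Lc k ka" and "vertex_label_ok Lb k kc"
  shows "cube_conditions n M k m"
proof -
  have "\<exists>lv v l1 p1 l2 p2. flat_marks M k m k' m' = {(lv, v), (l1, p1), (l2, p2)} \<and>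
      right_angle_at v p1 p2 \<and> vertex_label_ok lv k k'"
    if "k \<noteq> k'" "m' < n" "card (flat_marks M k m k' m') = 3" for k' m'
  proof -
    have "(k' = ka \<and> m' = va) \<or> (k' = kc \<and> m' = qa kc)"
      using cube_path_three_marks[of k' m'] that by auto
    then show ?thesis
    proof
      assume "k' = ka \<and> m' = va"
      moreover have "flat_marks M k m ka va = {(Lc, qc), (Lb, qb), (Ld, qd)}"
        using cube_path_coords moves(1) by (auto simp: flat_marks_eq[OF cube])
      moreover have "right_angle_at qc qb qd"
      proof -
        have "right_angle_at qc (qc(kb := qb kb)) (qc(kc := vc))"
          using axes(1) moves cube_path_coords by (intro right_angle_at_upd) auto
        then show ?thesis using steps(2,3) by simp
      qed
      ultimately show ?thesis using assms(1) by blast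
    next
      assume "k' = kc \<and> m' = qa kc"
      moreover have "flat_marks M k m kc (qa kc) = {(Lb, qb), (La, qa), (Lc, qc)}"
        using cube_path_coords moves(3) by (auto simp: flat_marks_eq[OF cube])
      moreover have "right_angle_at qb qa qc"
      proof -
        have "right_angle_at qb (qb(ka := qa ka)) (qb(kb := vb))"
          using axes(1) moves cube_path_coords by (intro right_angle_at_upd) auto
        then show ?thesis using steps(1,2) by simp
      qed
      ultimately show ?thesis using assms(2) by blast
    qed
  qed
  moreover have "{(k', m'). k' \<noteq> k \<and> m' < n \<and> card (flat_marks M k m k' m') = 3} =
      {(ka, va), (kc, qa kc)}"
    using cube_path_three_marks by auto
  ultimately show ?thesis
    using axes(1) cube_path_card_label by (auto simp: cube_conditions_def)
qed

end

section \<open>The hypercube curve\<close>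

fun axis_index :: "axis \<Rightarrow> nat" where
  "axis_index Aw = 0" | "axis_index Ax = 1" | "axis_index Ay = 2" | "axis_index Az = 3"

definition axis_at :: "nat \<Rightarrow> axis" where
  "axis_at i = [Aw, Ax, Ay, Az] ! (i mod 4)"

definition label_at :: "nat \<Rightarrow> label" where
  "label_at i = [LW, LX, LY, LZ] ! (i mod 4)"

text \<open>Point i of the curve (W(j), X(j), Y(j), Z(j) are the points 4j, ..., 4j + 3): step i
  moves along axis_at i, so by point i coordinate k has moved (i + 3 - axis_index k) div 4
  times.\<close>

definition curve_point :: "(axis \<Rightarrow> nat \<Rightarrow> nat) \<Rightarrow> nat \<Rightarrow> point4" where
  "curve_point s i = (\<lambda>k. s k ((i + 3 - axis_index k) div 4))"

definition curve_marking :: "(axis \<Rightarrow> nat \<Rightarrow> nat) \<Rightarrow> marking" where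
  "curve_marking s l = {curve_point s i | i. label_at i = l}"

lemma axis_index_less: "axis_index k < 4"
  by (cases k) simp_all

lemma less_4_cases: "(x::nat) < 4 \<Longrightarrow> x = 0 \<or> x = 1 \<or> x = 2 \<or> x = 3"
  by linarith

lemma mod_4_cases: "(i::nat) mod 4 = 0 \<or> i mod 4 = 1 \<or> i mod 4 = 2 \<or> i mod 4 = 3"
  by (rule less_4_cases) simp

lemma Suc_add_3_div_4:
  fixes i r :: nat
  assumes "r < 4"
  shows "(Suc i + 3 - r) div 4 = (i + 3 - r) div 4 + (if i mod 4 = r then 1 else 0)"
proof -
  define c where "c = i mod 4"
  have i: "i = c + 4 * (i div 4)" and "c < 4" by (simp_all add: c_def)
  have "(Suc c + 3 - r) div 4 = (c + 3 - r) div 4 + (if c = r then 1 else 0)"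
    using less_4_cases[OF \<open>c < 4\<close>] less_4_cases[OF assms] by (elim disjE) simp_all
  moreover have "Suc i + 3 - r = (Suc c + 3 - r) + 4 * (i div 4)"
    and "i + 3 - r = (c + 3 - r) + 4 * (i div 4)"
    using assms by (subst i, simp)+
  ultimately show ?thesis by (simp add: c_def)
qed

lemma axis_at_eq_iff: "axis_at i = k \<longleftrightarrow> i mod 4 = axis_index k"
  using mod_4_cases[of i] by (cases k) (auto simp: axis_at_def)

lemma label_at_eq_iff: "label_at i = label_at j \<longleftrightarrow> i mod 4 = j mod 4"
  using mod_4_cases[of i] mod_4_cases[of j] by (auto simp: label_at_def)

lemma UNIV_axis: "(UNIV :: axis set) = {Aw, Ax, Ay, Az}"
  using axis.exhaust by auto

lemma UNIV_label: "(UNIV :: label set) = {LW, LX, LY, LZ}"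
  using label.exhaust by auto

lemma axis_at_add: "axis_at (i + t) = [Aw, Ax, Ay, Az] ! ((i mod 4 + t) mod 4)"
  by (simp add: axis_at_def mod_add_left_eq)

lemma label_at_add: "label_at (i + t) = [LW, LX, LY, LZ] ! ((i mod 4 + t) mod 4)"
  by (simp add: label_at_def mod_add_left_eq)

lemma curve_cube_frame:
  "distinct [axis_at (i + 3), axis_at i, axis_at (i + 1), axis_at (i + 2)]"
  "{axis_at (i + 3), axis_at i, axis_at (i + 1), axis_at (i + 2)} = UNIV"
  "distinct [label_at i, label_at (i + 1), label_at (i + 2), label_at (i + 3)]"
  "{label_at i, label_at (i + 1), label_at (i + 2), label_at (i + 3)} = UNIV"
  "vertex_label_ok (label_at (i + 2)) (axis_at (i + 3)) (axis_at i)"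
  "vertex_label_ok (label_at (i + 1)) (axis_at (i + 3)) (axis_at (i + 2))"
  using mod_4_cases[of i]
  unfolding axis_at_add[of i] label_at_add[of i] axis_at_def[of i] label_at_def[of i] UNIV_axis UNIV_label
  by (elim disjE; simp add: vertex_label_ok_def insert_commute doubleton_eq_iff)+

lemma curve_point_Suc:
  "curve_point s (Suc i) = (curve_point s i)(axis_at i := curve_point s (Suc i) (axis_at i))"
proof
  fix k
  show "curve_point s (Suc i) k = ((curve_point s i)(axis_at i := curve_point s (Suc i) (axis_at i))) k"
  proof (cases "k = axis_at i")
    case False
    then have "i mod 4 \<noteq> axis_index k" using axis_at_eq_iff by metis
    then show ?thesis
      using Suc_add_3_div_4[OF axis_index_less[of k], of i] False by (simp add: curve_point_def)
  qed simp
qed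

lemma curve_point_Suc_moves:
  assumes "\<And>k j. s k (Suc j) \<noteq> s k j"
  shows "curve_point s (Suc i) (axis_at i) \<noteq> curve_point s i (axis_at i)"
  using Suc_add_3_div_4[OF axis_index_less[of "axis_at i"], of i] axis_at_eq_iff[of i "axis_at i"] assms
  by (simp add: curve_point_def)

lemma curve_point_cube:
  assumes "t < 4" shows "curve_point s (4 * j + axis_index k + 1 + t) k = s k (Suc j)"
proof -
  have "4 * j + axis_index k + 1 + t + 3 - axis_index k = t + 4 * Suc j" by simp
  then have "(4 * j + axis_index k + 1 + t + 3 - axis_index k) div 4 = Suc j"
    using assms by simp
  then show ?thesis by (simp add: curve_point_def)
qed

lemma curve_point_block:
  assumes "c < 4" shows "curve_point s (4 * j + c) k = s k (j + (c + 3 - axis_index k) div 4)"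
proof -
  have "4 * j + c + 3 - axis_index k = (c + 3 - axis_index k) + 4 * j"
    using axis_index_less[of k] by linarith
  then have "(4 * j + c + 3 - axis_index k) div 4 = j + (c + 3 - axis_index k) div 4"
    by simp
  then show ?thesis by (simp add: curve_point_def)
qed

lemma curve_point_less: "(\<And>k. cyclic_enum n (s k)) \<Longrightarrow> curve_point s i k < n"
  by (simp add: curve_point_def cyclic_enum_less)

lemma curve_point_unique:
  assumes enum: "\<And>k. cyclic_enum n (s k)"
    and "i mod 4 = i' mod 4" "curve_point s i k = curve_point s i' k"
  shows "curve_point s i = curve_point s i'"
proof -
  define c where "c = i mod 4"
  define e where "e k = (c + 3 - axis_index k) div 4" for k
  have "c < 4" and i: "i = 4 * (i div 4) + c" by (simp_all add: c_def)
  have i': "i' = 4 * (i' div 4) + c" by (simp add: c_def assms(2))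
  have coord: "curve_point s i k' = s k' (i div 4 + e k')"
      "curve_point s i' k' = s k' (i' div 4 + e k')" for k'
    unfolding e_def using curve_point_block[OF \<open>c < 4\<close>] i i' by metis+
  have "(i div 4 + e k) mod n = (i' div 4 + e k) mod n"
    using assms(3) by (simp add: coord cyclic_enum_eq_iff[OF enum])
  then have "i div 4 mod n = i' div 4 mod n" by (simp add: mod_add_right_cancel_nat)
  then show ?thesis
    by (simp add: fun_eq_iff coord cyclic_enum_eq_iff[OF enum] mod_add_right_cancel_nat)
qed

lemma curve_marking_cube:
  assumes enum: "\<And>k. cyclic_enum n (s k)" and "s k (Suc j) = m"
  defines "i0 \<equiv> 4 * j + axis_index k + 1"
  shows "p \<in> curve_marking s l \<and> p k = m \<longleftrightarrow>
    (l, p) \<in> (\<lambda>t. (label_at (i0 + t), curve_point s (i0 + t))) ` {..<4}"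
proof
  assume "(l, p) \<in> (\<lambda>t. (label_at (i0 + t), curve_point s (i0 + t))) ` {..<4}"
  then obtain t where "t < 4" "l = label_at (i0 + t)" "p = curve_point s (i0 + t)" by auto
  then show "p \<in> curve_marking s l \<and> p k = m"
    using assms(2) curve_point_cube[OF \<open>t < 4\<close>] unfolding curve_marking_def i0_def by auto
next
  assume "p \<in> curve_marking s l \<and> p k = m"
  then obtain i where p: "p = curve_point s i" "label_at i = l" "curve_point s i k = m"
    by (auto simp: curve_marking_def)
  define t where "t = (i + 3 * i0) mod 4"
  have "i0 + (i + 3 * i0) = i + 4 * i0" by simp
  then have "t < 4" and t: "(i0 + t) mod 4 = i mod 4"
    unfolding t_def by (simp_all add: mod_add_right_eq)
  have "curve_point s (i0 + t) k = m"
    using curve_point_cube[OF \<open>t < 4\<close>] assms(2) by (simp add: i0_def)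
  with p t have "p = curve_point s (i0 + t)"
    using curve_point_unique[OF enum, where i=i and i'="i0 + t" and k=k] by simp
  moreover have "label_at (i0 + t) = l" using t p(2) label_at_eq_iff by metis
  ultimately show "(l, p) \<in> (\<lambda>t. (label_at (i0 + t), curve_point s (i0 + t))) ` {..<4}"
    using \<open>t < 4\<close> by auto
qed

lemma curve_marking_cube_conditions:
  assumes enum: "\<And>k. cyclic_enum n (s k)" and moves: "\<And>k j. s k (Suc j) \<noteq> s k j" and "m < n"
  shows "cube_conditions n (curve_marking s) k m"
proof -
  obtain j where j: "s k (Suc j) = m"
    using cyclic_enum_surj[OF cyclic_enum_Suc[OF enum[of k]] \<open>m < n\<close>] by auto
  define i0 where "i0 = 4 * j + axis_index k + 1"
  have k: "axis_at (i0 + 3) = k"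
  proof -
    have "i0 + 3 = axis_index k + 4 * Suc j" by (simp add: i0_def)
    then show ?thesis by (simp add: axis_at_eq_iff axis_index_less)
  qed
  have "(\<lambda>t. (label_at (i0 + t), curve_point s (i0 + t))) ` {..<4} =
      {(label_at i0, curve_point s i0), (label_at (i0 + 1), curve_point s (i0 + 1)),
       (label_at (i0 + 2), curve_point s (i0 + 2)), (label_at (i0 + 3), curve_point s (i0 + 3))}"
    by (simp add: numeral_eq_Suc lessThan_Suc insert_commute)
  then have cube: "p \<in> curve_marking s l \<and> p k = m \<longleftrightarrow> (l, p) \<in> \<dots>" for l p
    using curve_marking_cube[where s=s, OF enum j] unfolding i0_def by simp
  show ?thesis
    using curve_cube_frame[of i0, unfolded k] curve_point_Suc[of s] curve_point_Suc_moves[where s=s, OF moves]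
      curve_point_less[where s=s, OF enum]
    by (intro cube_conditionsI[where k=k and ka="axis_at i0" and kb="axis_at (i0 + 1)"
          and kc="axis_at (i0 + 2)" and va="curve_point s (i0 + 1) (axis_at i0)"
          and vb="curve_point s (i0 + 2) (axis_at (i0 + 1))"
          and vc="curve_point s (i0 + 3) (axis_at (i0 + 2))", OF _ _ _ _ _ _ _ _ _ _ cube])
      (simp_all add: k numeral_3_eq_3)
qed

lemma marking_conditions_curve_marking:
  assumes enum: "\<And>k. cyclic_enum n (s k)" and moves: "\<And>k j. s k (Suc j) \<noteq> s k j"
  shows "marking_conditions n (curve_marking s)"
proof (rule marking_conditionsI)
  show "\<forall>l. \<forall>p\<in>curve_marking s l. \<forall>k. p k < n"
    using curve_point_less[where s=s, OF enum] by (auto simp: curve_marking_def)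
  show "cube_conditions n (curve_marking s) k m" if "m < n" for k m
    using curve_marking_cube_conditions[where s=s, OF enum moves that] .
qed

lemma curve_marking_step:
  assumes "p \<in> curve_marking s (label_at i)"
  shows "\<exists>q\<in>curve_marking s (label_at (Suc i)). \<forall>k. k \<noteq> axis_at i \<longrightarrow> q k = p k"
proof -
  obtain i' where p: "p = curve_point s i'" and "label_at i' = label_at i"
    using assms by (auto simp: curve_marking_def)
  then have "i' mod 4 = i mod 4" by (simp add: label_at_eq_iff)
  then have axis: "axis_at i' = axis_at i" and "label_at (Suc i') = label_at (Suc i)"
    by (simp add: axis_at_def, metis label_at_eq_iff mod_Suc_eq)
  then have "curve_point s (Suc i') \<in> curve_marking s (label_at (Suc i))"
    unfolding curve_marking_def by blast
  moreover have "curve_point s (Suc i') k = p k" if "k \<noteq> axis_at i" for k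
    by (subst curve_point_Suc) (simp add: p axis that)
  ultimately show ?thesis by blast
qed

lemma joinable_curve_marking: "joinable (curve_marking s)"
  unfolding joinable_def
  using curve_marking_step[where s=s and i=0] curve_marking_step[where s=s and i=1]
    curve_marking_step[where s=s and i=2] curve_marking_step[where s=s and i=3]
  by (simp add: label_at_def axis_at_def)

lemma curve_marking_block:
  assumes "c < 4" shows "curve_marking s (label_at c) = range (\<lambda>j. curve_point s (4 * j + c))"
proof -
  have "label_at i = label_at c \<longleftrightarrow> (\<exists>j. i = 4 * j + c)" for i
  proof
    assume "label_at i = label_at c"
    then have "i mod 4 = c" using assms by (simp add: label_at_eq_iff)
    then show "\<exists>j. i = 4 * j + c" using div_mult_mod_eq[of i 4] by (metis mult.commute)
  qed (auto simp: label_at_eq_iff)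
  then show ?thesis by (auto simp: curve_marking_def)
qed

lemma proj_wy_curve_marking:
  "proj_wy (curve_marking s) = (range (\<lambda>j. (s Aw j, s Ay j)), range (\<lambda>j. (s Aw (Suc j), s Ay j)))"
  using curve_marking_block[of 0 s] curve_marking_block[of 1 s]
  by (simp add: proj_wy_def image_image label_at_def
      curve_point_block[of 0, simplified] curve_point_block[of 1, simplified])

lemma proj_zx_curve_marking:
  "proj_zx (curve_marking s) = (range (\<lambda>j. (s Az j, s Ax (Suc j))), range (\<lambda>j. (s Az j, s Ax j)))"
  using curve_marking_block[of 3 s] curve_marking_block[of 0 s]
  by (simp add: proj_zx_def image_image label_at_def
      curve_point_block[of 0, simplified] curve_point_block[of 3, simplified])

lemma range_Suc_periodic:
  assumes "\<And>k. g (k + n) = g k" and "0 < n"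
  shows "range (\<lambda>k. g (Suc k)) = range g"
proof -
  have "g k = g (Suc (k + n - 1))" for k using assms by simp
  then show ?thesis by auto
qed

text \<open>The zx-enumeration starts at a Z-marking, which on the hypercube curve comes after the
  first W-marking; hence the shift of \<zeta>.\<close>

definition hypercube_coords ::
    "(nat \<Rightarrow> nat) \<Rightarrow> (nat \<Rightarrow> nat) \<Rightarrow> (nat \<Rightarrow> nat) \<Rightarrow> (nat \<Rightarrow> nat) \<Rightarrow> axis \<Rightarrow> nat \<Rightarrow> nat" where
  "hypercube_coords \<alpha> \<beta> \<zeta> \<xi> k = (case k of Aw \<Rightarrow> \<alpha> | Ax \<Rightarrow> \<xi> | Ay \<Rightarrow> \<beta> | Az \<Rightarrow> (\<lambda>j. \<zeta> (Suc j)))"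

definition hypercube_marking ::
    "(nat \<Rightarrow> nat) \<Rightarrow> (nat \<Rightarrow> nat) \<Rightarrow> (nat \<Rightarrow> nat) \<Rightarrow> (nat \<Rightarrow> nat) \<Rightarrow> marking" where
  "hypercube_marking \<alpha> \<beta> \<zeta> \<xi> = curve_marking (hypercube_coords \<alpha> \<beta> \<zeta> \<xi>)"

lemma marking_conditions_hypercube_marking:
  assumes "grid_enumeration n Gwy \<alpha> \<beta>" and "grid_enumeration n Gzx \<zeta> \<xi>"
  shows "marking_conditions n (hypercube_marking \<alpha> \<beta> \<zeta> \<xi>)"
  unfolding hypercube_marking_def
proof (rule marking_conditions_curve_marking)
  show "cyclic_enum n (hypercube_coords \<alpha> \<beta> \<zeta> \<xi> k)" for k
    using assms cyclic_enum_Suc by (cases k) (simp_all add: hypercube_coords_def grid_enumeration_def)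
  show "hypercube_coords \<alpha> \<beta> \<zeta> \<xi> k (Suc j) \<noteq> hypercube_coords \<alpha> \<beta> \<zeta> \<xi> k j" for k j
    using assms by (cases k) (simp_all add: hypercube_coords_def grid_enumeration_def)
qed

lemma joinable_hypercube_marking: "joinable (hypercube_marking \<alpha> \<beta> \<zeta> \<xi>)"
  by (simp add: hypercube_marking_def joinable_curve_marking)

lemma proj_wy_hypercube_marking:
  "grid_enumeration n Gwy \<alpha> \<beta> \<Longrightarrow> proj_wy (hypercube_marking \<alpha> \<beta> \<zeta> \<xi>) = Gwy"
  by (simp add: hypercube_marking_def hypercube_coords_def proj_wy_curve_marking
      grid_enumeration_def prod_eq_iff)

lemma proj_zx_hypercube_marking:
  assumes "grid_enumeration n Gzx \<zeta> \<xi>"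
  shows "proj_zx (hypercube_marking \<alpha> \<beta> \<zeta> \<xi>) = Gzx"
proof -
  have \<zeta>: "cyclic_enum n \<zeta>" and \<xi>: "cyclic_enum n \<xi>"
    using assms by (simp_all add: grid_enumeration_def)
  have "range (\<lambda>k. (\<zeta> (Suc k), \<xi> (Suc k))) = range (\<lambda>k. (\<zeta> k, \<xi> k))"
    using range_Suc_periodic[OF _ cyclic_enum_pos[OF \<zeta>], of "\<lambda>k. (\<zeta> k, \<xi> k)"]
    by (simp add: cyclic_enum_periodic \<zeta> \<xi>)
  then show ?thesis
    using assms by (simp add: hypercube_marking_def hypercube_coords_def proj_zx_curve_marking
        grid_enumeration_def prod_eq_iff)
qed

theorem theorem8p4:
  fixes n :: nat and Gwy Gzx :: grid
  assumes "lagrangian_grid n Gwy"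
    and "lagrangian_grid n Gzx"
    and "\<forall>d\<in>crossing_actions n Gwy. \<forall>d'\<in>crossing_actions n Gzx. d \<noteq> d'"
  shows "\<exists>M. lagrangian_hypercube n M \<and> proj_wy M = Gwy \<and> proj_zx M = Gzx"
proof -
  have "immersed_grid_diagram n Gwy" "immersed_grid_diagram n Gzx"
    using assms(1,2) by (simp_all add: lagrangian_grid_def)
  then obtain \<alpha> \<beta> \<zeta> \<xi> where wy: "grid_enumeration n Gwy \<alpha> \<beta>" and zx: "grid_enumeration n Gzx \<zeta> \<xi>"
    by (metis immersed_grid_enumeration)
  let ?M = "hypercube_marking \<alpha> \<beta> \<zeta> \<xi>"
  have proj: "proj_wy ?M = Gwy" "proj_zx ?M = Gzx"
    using proj_wy_hypercube_marking[OF wy] proj_zx_hypercube_marking[OF zx] by blast+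
  have "lagrangian_hypercube n ?M"
    using marking_conditions_hypercube_marking[OF wy zx] joinable_hypercube_marking assms
    unfolding lagrangian_hypercube_def proj by blast
  with proj show ?thesis by blast
qed

end
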